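(* Let $ER_{min}\le ER_{max}$ be fixed memory addresses and $ER=[ER_{min},ER_{max}]$. For every execution trace (in the sense described in the context), if the trace satisfies the hardware-model formulas (HM1)–(HM6) together with $$\text{(L10)}\quad \mathbf{G}\{\neg reset \land (PC\in ER)\land \neg\mathbf{X}(PC\in ER)\rightarrow (PC=ER_{max})\lor \mathbf{X}(reset)\},$$ $$\text{(L11)}\quad \mathbf{G}\{\neg reset \land \neg(PC\in ER)\land \mathbf{X}(PC\in ER)\rightarrow \mathbf{X}(PC=ER_{min})\lor \mathbf{X}(reset)\},$$ $$\text{(L12)}\quad \mathbf{G}\{(PC\in ER)\land (irq\lor DMA_{en})\rightarrow reset\},$$ then it satisfies $$\mathbf{G}\{(PC\in ER)\rightarrow [(PC\in ER)\land\neg irq\land\neg DMA_{en}]\ \mathbf{W}\ [(PC=ER_{max})\lor reset]\}\ \land\ \mathbf{G}\{\neg reset\land\neg(PC\in ER)\land \mathbf{X}(PC\in ER)\rightarrow \mathbf{X}(PC=ER_{min})\lor\mathbf{X}(reset)\}.$$ That is, the conjunction of (HM1)–(HM6), (L10), (L11), (L12) implies the last formula in Linear Temporal Logic.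
   Context: Model of a low-end microcontroller (MCU): execution is a discrete sequence of MCU states (one per clock cycle), and the following signals are observed at each state: the program counter $PC$ (an address); $R_{en}$ and $W_{en}$ (1-bit CPU memory read/write enable); $D_{addr}$ (address of the CPU memory access); $DMA_{en}$ (1-bit, DMA active) and $DMA_{addr}$ (address accessed by DMA); $irq$ (1-bit, an interrupt is happening); $reset$ (1-bit, MCU reset). For a contiguous memory region $M=[M_{min},M_{max}]$, "$a\in M$" means $M_{min}\le a\le M_{max}$. Execution is also modeled by a relation ${\bf X}(s)\leftarrow EXEC(s,i)$ ("the next state is produced by executing instruction $i$ in the current state $s$") and by state-property sets $READ_M, WRITE_M, DMA^R_M, DMA^W_M, IRQ, RESET$ (states produced by a CPU read from $M$, a CPU write to $M$, a DMA read/write of $M$, states where an interrupt / a reset is triggered). LTL operators over infinite traces: $\mathbf{X}\phi$ ($\phi$ holds at the next state), $\mathbf{G}\phi$ ($\phi$ holds at all current and future states), $\phi\,\mathbf{U}\,\psi$ ($\psi$ holds at some current/future state and $\phi$ holds at all states before it), $\phi\,\mathbf{W}\,\psi\equiv(\phi\,\mathbf{U}\,\psi)\lor\mathbf{G}\phi$, $\phi\,\mathbf{B}\,\psi\equiv\neg(\neg\phi\,\mathbf{U}\,\psi)$. Hardware model formulas (HM1)–(HM6), assumed for every contiguous region $M$: (HM1) $\mathbf{G}\{[\mathbf{X}(s)\leftarrow EXEC(s,i_k)\land i_k\in M]\rightarrow (PC\in M)\}$; (HM2) $\mathbf{G}\{\mathbf{X}(s)\in READ_M\rightarrow (R_{en}\land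 D_{addr}\in M)\}$; (HM3) $\mathbf{G}\{\mathbf{X}(s)\in WRITE_M\rightarrow (W_{en}\land D_{addr}\in M)\}$; (HM4) $\mathbf{G}\{(\mathbf{X}(s)\in DMA^R_M\lor \mathbf{X}(s)\in DMA^W_M)\rightarrow (DMA_{en}\land DMA_{addr}\in M)\}$; (HM5) $\mathbf{G}\{s\in IRQ\leftrightarrow irq\}$; (HM6) $\mathbf{G}\{s\in RESET\leftrightarrow reset\}$. *)

theory Defs
  imports Main
begin

type_synonym addr = nat

(* Observed MCU signals; the record is extensible ('a) so the full MCU state
   may contain further (unobserved) components. *)
record mcu_state =
  pc       :: addr
  r_en     :: bool
  w_en     :: bool
  d_addr   :: addr
  dma_en   :: bool
  dma_addr :: addr
  irq      :: bool
  reset    :: bool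

(* Infinite execution traces: one state per clock cycle. *)
type_synonym 's trace = "nat \<Rightarrow> 's"

definition suffix :: "nat \<Rightarrow> 's trace \<Rightarrow> 's trace" where
  "suffix i \<sigma> = (\<lambda>n. \<sigma> (n + i))"

definition ltl_X :: "('s trace \<Rightarrow> bool) \<Rightarrow> 's trace \<Rightarrow> bool" where
  "ltl_X \<phi> \<sigma> = \<phi> (suffix 1 \<sigma>)"

definition ltl_G :: "('s trace \<Rightarrow> bool) \<Rightarrow> 's trace \<Rightarrow> bool" where
  "ltl_G \<phi> \<sigma> = (\<forall>i. \<phi> (suffix i \<sigma>))"

definition ltl_U :: "('s trace \<Rightarrow> bool) \<Rightarrow> ('s trace \<Rightarrow> bool) \<Rightarrow> 's trace \<Rightarrow> bool" where
  "ltl_U \<phi> \<psi> \<sigma> = (\<exists>k. \<psi> (suffix k \<sigma>) \<and> (\<forall>j<k. \<phi> (suffix j \<sigma>)))"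

definition ltl_W :: "('s trace \<Rightarrow> bool) \<Rightarrow> ('s trace \<Rightarrow> bool) \<Rightarrow> 's trace \<Rightarrow> bool" where
  "ltl_W \<phi> \<psi> \<sigma> = (ltl_U \<phi> \<psi> \<sigma> \<or> ltl_G \<phi> \<sigma>)"

definition ltl_B :: "('s trace \<Rightarrow> bool) \<Rightarrow> ('s trace \<Rightarrow> bool) \<Rightarrow> 's trace \<Rightarrow> bool" where
  "ltl_B \<phi> \<psi> \<sigma> = (\<not> ltl_U (\<lambda>\<tau>. \<not> \<phi> \<tau>) \<psi> \<sigma>)"

(* EXEC s i is the state produced by executing instruction i
   in state s; iaddr i is the address where instruction i is stored.
   READ M, WRITE M, DMAR M, DMAW M are the state-property sets READ_M, WRITE_M,
   DMA^R_M, DMA^W_M; IRQ, RESET the interrupt / reset state sets. *)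
definition HM :: "('a mcu_state_scheme \<Rightarrow> 'i \<Rightarrow> 'a mcu_state_scheme) \<Rightarrow> ('i \<Rightarrow> addr)
   \<Rightarrow> (addr set \<Rightarrow> 'a mcu_state_scheme set) \<Rightarrow> (addr set \<Rightarrow> 'a mcu_state_scheme set)
   \<Rightarrow> (addr set \<Rightarrow> 'a mcu_state_scheme set) \<Rightarrow> (addr set \<Rightarrow> 'a mcu_state_scheme set)
   \<Rightarrow> 'a mcu_state_scheme set \<Rightarrow> 'a mcu_state_scheme set
   \<Rightarrow> 'a mcu_state_scheme trace \<Rightarrow> bool" where
  "HM EXEC iaddr READ WRITE DMAR DMAW IRQ RESET \<sigma> \<longleftrightarrow>
     (\<forall>Mmin Mmax. Mmin \<le> Mmax \<longrightarrow> (let M = {Mmin..Mmax} in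
        \<comment> \<open>HM1\<close>
        ltl_G (\<lambda>\<tau>. \<forall>i. (\<tau> 1 = EXEC (\<tau> 0) i \<and> iaddr i \<in> M) \<longrightarrow> pc (\<tau> 0) \<in> M) \<sigma> \<and>
        \<comment> \<open>HM2\<close>
        ltl_G (\<lambda>\<tau>. \<tau> 1 \<in> READ M \<longrightarrow> (r_en (\<tau> 0) \<and> d_addr (\<tau> 0) \<in> M)) \<sigma> \<and>
        \<comment> \<open>HM3\<close>
        ltl_G (\<lambda>\<tau>. \<tau> 1 \<in> WRITE M \<longrightarrow> (w_en (\<tau> 0) \<and> d_addr (\<tau> 0) \<in> M)) \<sigma> \<and>
        \<comment> \<open>HM4\<close>
        ltl_G (\<lambda>\<tau>. (\<tau> 1 \<in> DMAR M \<or> \<tau> 1 \<in> DMAW M) \<longrightarrow>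
                     (dma_en (\<tau> 0) \<and> dma_addr (\<tau> 0) \<in> M)) \<sigma>)) \<and>
     \<comment> \<open>HM5\<close>
     ltl_G (\<lambda>\<tau>. \<tau> 0 \<in> IRQ \<longleftrightarrow> irq (\<tau> 0)) \<sigma> \<and>
     \<comment> \<open>HM6\<close>
     ltl_G (\<lambda>\<tau>. \<tau> 0 \<in> RESET \<longleftrightarrow> reset (\<tau> 0)) \<sigma>"

definition pc_in :: "addr set \<Rightarrow> 'a mcu_state_scheme trace \<Rightarrow> bool" where
  "pc_in M \<tau> = (pc (\<tau> 0) \<in> M)"

definition pc_eq :: "addr \<Rightarrow> 'a mcu_state_scheme trace \<Rightarrow> bool" where
  "pc_eq a \<tau> = (pc (\<tau> 0) = a)"

definition is_reset :: "'a mcu_state_scheme trace \<Rightarrow> bool" where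
  "is_reset \<tau> = reset (\<tau> 0)"

definition is_irq :: "'a mcu_state_scheme trace \<Rightarrow> bool" where
  "is_irq \<tau> = irq (\<tau> 0)"

definition is_dma :: "'a mcu_state_scheme trace \<Rightarrow> bool" where
  "is_dma \<tau> = dma_en (\<tau> 0)"

end

theory Submission
  imports Defs
begin

(* Starting with PC in ER, the invariant "PC in ER" is preserved until PC = ERmax or a reset:
   by (L10) the only other way out of ER is followed by a reset. While PC is in ER and there
   is no reset, (L12) excludes interrupts and DMA. *)

lemma suffix_0 [simp]: "suffix 0 \<sigma> = \<sigma>"
  by (simp add: suffix_def)

lemma suffix_suffix [simp]: "suffix j (suffix i \<sigma>) = suffix (j + i) \<sigma>"
  by (simp add: suffix_def add.assoc)

lemma ltl_G_suffix: "ltl_G \<phi> \<sigma> \<Longrightarrow> ltl_G \<phi> (suffix i \<sigma>)"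
  by (simp add: ltl_G_def)

lemma ltl_G_mono: "ltl_G \<phi> \<sigma> \<Longrightarrow> (\<And>\<tau>. \<phi> \<tau> \<Longrightarrow> \<psi> \<tau>) \<Longrightarrow> ltl_G \<psi> \<sigma>"
  by (simp add: ltl_G_def)

lemma ltl_W_invariant:
  assumes "R \<sigma>"
    and P: "ltl_G (\<lambda>\<tau>. R \<tau> \<and> \<not> Q \<tau> \<longrightarrow> P \<tau>) \<sigma>"
    and step: "ltl_G (\<lambda>\<tau>. R \<tau> \<and> \<not> Q \<tau> \<and> \<not> ltl_X Q \<tau> \<longrightarrow> ltl_X R \<tau>) \<sigma>"
  shows "ltl_W P Q \<sigma>"
proof -
  have R_Suc: "R (suffix (Suc j) \<sigma>)"
    if "R (suffix j \<sigma>)" "\<not> Q (suffix j \<sigma>)" "\<not> Q (suffix (Suc j) \<sigma>)" for j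
    using spec[OF step[unfolded ltl_G_def], of j] that by (simp add: ltl_X_def)
  have R: "R (suffix j \<sigma>)" if "\<forall>m\<le>j. \<not> Q (suffix m \<sigma>)" for j
    using that
  proof (induction j)
    case 0
    then show ?case using \<open>R \<sigma>\<close> by simp
  next
    case (Suc j)
    then show ?case by (simp add: R_Suc)
  qed
  have P_before: "P (suffix j \<sigma>)" if "\<forall>m\<le>j. \<not> Q (suffix m \<sigma>)" for j
    using spec[OF P[unfolded ltl_G_def], of j] R[OF that] that by simp
  show ?thesis
  proof (cases "\<exists>k. Q (suffix k \<sigma>)")
    case True
    define k where "k = (LEAST k. Q (suffix k \<sigma>))"
    have "Q (suffix k \<sigma>)"
      using True unfolding k_def by (rule LeastI_ex)
    moreover have "\<not> Q (suffix m \<sigma>)" if "m < k" for m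
      using that unfolding k_def by (rule not_less_Least)
    then have "P (suffix j \<sigma>)" if "j < k" for j
      using that by (simp add: P_before)
    ultimately show ?thesis
      unfolding ltl_W_def ltl_U_def by blast
  next
    case False
    then show ?thesis
      using P_before unfolding ltl_W_def ltl_G_def by blast
  qed
qed

lemma ltl_G_W_invariant:
  assumes "ltl_G (\<lambda>\<tau>. R \<tau> \<and> \<not> Q \<tau> \<longrightarrow> P \<tau>) \<sigma>"
    and "ltl_G (\<lambda>\<tau>. R \<tau> \<and> \<not> Q \<tau> \<and> \<not> ltl_X Q \<tau> \<longrightarrow> ltl_X R \<tau>) \<sigma>"
  shows "ltl_G (\<lambda>\<tau>. R \<tau> \<longrightarrow> ltl_W P Q \<tau>) \<sigma>"
  unfolding ltl_G_def[of "\<lambda>\<tau>. R \<tau> \<longrightarrow> ltl_W P Q \<tau>"]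
  using ltl_W_invariant[OF _ ltl_G_suffix[OF assms(1)] ltl_G_suffix[OF assms(2)]] by blast

theorem theorem1:
  fixes ERmin ERmax :: addr
    and EXEC :: "'a mcu_state_scheme \<Rightarrow> 'i \<Rightarrow> 'a mcu_state_scheme"
    and iaddr :: "'i \<Rightarrow> addr"
    and READ WRITE DMAR DMAW :: "addr set \<Rightarrow> 'a mcu_state_scheme set"
    and IRQ RESET :: "'a mcu_state_scheme set"
    and \<sigma> :: "'a mcu_state_scheme trace"
  defines "ER \<equiv> {ERmin..ERmax}"
  assumes "ERmin \<le> ERmax"
    and "HM EXEC iaddr READ WRITE DMAR DMAW IRQ RESET \<sigma>"
    and L10: "ltl_G (\<lambda>\<tau>. (\<not> is_reset \<tau> \<and> pc_in ER \<tau> \<and> \<not> ltl_X (pc_in ER) \<tau>)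
                \<longrightarrow> (pc_eq ERmax \<tau> \<or> ltl_X is_reset \<tau>)) \<sigma>"
    and L11: "ltl_G (\<lambda>\<tau>. (\<not> is_reset \<tau> \<and> \<not> pc_in ER \<tau> \<and> ltl_X (pc_in ER) \<tau>)
                \<longrightarrow> (ltl_X (pc_eq ERmin) \<tau> \<or> ltl_X is_reset \<tau>)) \<sigma>"
    and L12: "ltl_G (\<lambda>\<tau>. (pc_in ER \<tau> \<and> (is_irq \<tau> \<or> is_dma \<tau>)) \<longrightarrow> is_reset \<tau>) \<sigma>"
  shows "ltl_G (\<lambda>\<tau>. pc_in ER \<tau> \<longrightarrow>
            ltl_W (\<lambda>\<rho>. pc_in ER \<rho> \<and> \<not> is_irq \<rho> \<and> \<not> is_dma \<rho>)
                  (\<lambda>\<rho>. pc_eq ERmax \<rho> \<or> is_reset \<rho>) \<tau>) \<sigma>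
       \<and> ltl_G (\<lambda>\<tau>. (\<not> is_reset \<tau> \<and> \<not> pc_in ER \<tau> \<and> ltl_X (pc_in ER) \<tau>)
                \<longrightarrow> (ltl_X (pc_eq ERmin) \<tau> \<or> ltl_X is_reset \<tau>)) \<sigma>"
proof -
  let ?Q = "\<lambda>\<rho>. pc_eq ERmax \<rho> \<or> is_reset \<rho>"
  have "ltl_G (\<lambda>\<tau>. pc_in ER \<tau> \<and> \<not> ?Q \<tau> \<longrightarrow> pc_in ER \<tau> \<and> \<not> is_irq \<tau> \<and> \<not> is_dma \<tau>) \<sigma>"
    using L12 by (rule ltl_G_mono) blast
  moreover have "ltl_G (\<lambda>\<tau>. pc_in ER \<tau> \<and> \<not> ?Q \<tau> \<and> \<not> ltl_X ?Q \<tau> \<longrightarrow> ltl_X (pc_in ER) \<tau>) \<sigma>"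
    using L10 by (rule ltl_G_mono) (auto simp: ltl_X_def)
  ultimately have "ltl_G (\<lambda>\<tau>. pc_in ER \<tau> \<longrightarrow>
      ltl_W (\<lambda>\<rho>. pc_in ER \<rho> \<and> \<not> is_irq \<rho> \<and> \<not> is_dma \<rho>) ?Q \<tau>) \<sigma>"
    by (rule ltl_G_W_invariant)
  then show ?thesis
    using L11 by (rule conjI)
qed

end
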